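(* Let $\phi:[0,1]\to[0,1]$ be concave with $\phi(0)=0$, $\phi(1)=1$ and continuous at $0$. Then for every measurable $X$, \[ \|X\|_{TM_\phi}=\sup_{0<t<1}\left\{\frac{1-\phi(1-t)}{t}\,\mathbb{E}[|X|]+\left(1-\frac{1-\phi(1-t)}{t}\right)\operatorname{CVar}_t(|X|)\right\}=\sup_{0<t<1}\operatorname{RIM}_{t,\beta(t)}(|X|), \] where $\beta(t)=\frac{1-\phi(1-t)}{t}$ and $\operatorname{RIM}_{\alpha,\beta}(Z)=\beta\,\mathbb{E}[Z]+(1-\beta)\operatorname{CVar}_\alpha(Z)$.
   Context: $\Omega=[0,1]$ with Lebesgue measure $\mu$; $X^*(\omega)=\inf\{\lambda\ge0:\mu\{|X|>\lambda\}\le\omega\}$; $\mathbb{E}[|X|]=\int_0^1X^*\,d\omega$; for $Z\ge0$, $\operatorname{CVar}_\alpha(Z)=\frac{1}{1-\alpha}\int_0^{1-\alpha}Z^*(\omega)\,d\omega$. The positive translation equivariant Marcinkiewicz norm is $\|X\|_{TM_\phi}=\sup_{0<t<1}\{\frac{\phi(t)}{t}\int_0^tX^*\,d\omega+\frac{\phi(t)-1}{t-1}\int_t^1X^*\,d\omega\}$. *)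

theory Defs
  imports "HOL-Analysis.Analysis"
begin

text \<open>Omega = [0,1] with Lebesgue measure. Random variables are real functions,
  only their values on [0,1] matter. All quantities below are nonnegative and
  may be infinite, so they are valued in ennreal.\<close>

text \<open>Decreasing rearrangement X*(w) = inf{lambda >= 0 : mu{|X| > lambda} <= w}
  (inf of the empty set is infinity).\<close>
definition rearr :: "(real \<Rightarrow> real) \<Rightarrow> real \<Rightarrow> ennreal" where
  "rearr X w = Inf {ennreal l | l. l \<ge> 0 \<and>
      emeasure lebesgue {x \<in> {0..1}. l < \<bar>X x\<bar>} \<le> ennreal w}"

definition expect_abs :: "(real \<Rightarrow> real) \<Rightarrow> ennreal" where
  "expect_abs X = (\<integral>\<^sup>+ w. rearr X w * indicator {0..1} w \<partial>lborel)"

definition CVar :: "real \<Rightarrow> (real \<Rightarrow> real) \<Rightarrow> ennreal" where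
  "CVar \<alpha> Z = ennreal (1 / (1 - \<alpha>)) *
      (\<integral>\<^sup>+ w. rearr Z w * indicator {0..1 - \<alpha>} w \<partial>lborel)"

definition RIM :: "real \<Rightarrow> real \<Rightarrow> (real \<Rightarrow> real) \<Rightarrow> ennreal" where
  "RIM \<alpha> \<beta> Z = ennreal \<beta> * expect_abs Z + ennreal (1 - \<beta>) * CVar \<alpha> Z"

definition TM_norm :: "(real \<Rightarrow> real) \<Rightarrow> (real \<Rightarrow> real) \<Rightarrow> ennreal" where
  "TM_norm \<phi> X = (SUP t\<in>{0<..<1}.
      ennreal (\<phi> t / t) * (\<integral>\<^sup>+ w. rearr X w * indicator {0..t} w \<partial>lborel)
    + ennreal ((\<phi> t - 1) / (t - 1)) * (\<integral>\<^sup>+ w. rearr X w * indicator {t..1} w \<partial>lborel))"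

end

theory Submission
  imports Defs
begin

text \<open>Substitute \<open>t = 1 - s\<close>. Splitting \<open>E|X| = \<integral>\<^sub>0\<^sup>s X* + \<integral>\<^sub>s\<^sup>1 X*\<close> and using
  \<open>CVar\<^sub>1\<^sub>-\<^sub>s(|X|) = (1/s) \<integral>\<^sub>0\<^sup>s X*\<close>, the term of the Marcinkiewicz supremum at \<open>s\<close> equals
  the RIM term at \<open>t\<close> termwise, because with \<open>\<beta> = (1 - \<phi> s)/(1 - s) = (\<phi> s - 1)/(s - 1)\<close>
  one has \<open>\<phi> s / s = \<beta> + (1 - \<beta>)/s\<close>. Concavity gives \<open>s \<le> \<phi> s \<le> 1\<close>, i.e. \<open>0 \<le> \<beta> \<le> 1\<close>,
  which is what makes this identity of nonnegative weights valid in \<open>ennreal\<close>.\<close>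

lemma rearr_abs: "rearr (\<lambda>x. \<bar>X x\<bar>) = rearr X"
  by (rule ext) (simp add: rearr_def)

lemma rearr_antimono: "w \<le> w' \<Longrightarrow> rearr X w' \<le> rearr X w"
  unfolding rearr_def
  by (rule Inf_superset_mono) (blast intro: order_trans ennreal_leI)

lemma rearr_borel_measurable: "rearr X \<in> borel_measurable borel"
proof (rule borel_measurableI_greater)
  fix y
  have "is_interval {w. y < rearr X w}"
    unfolding is_interval_1 using rearr_antimono[of _ _ X] by (auto intro: less_le_trans)
  then show "{w \<in> space borel. y < rearr X w} \<in> sets borel"
    using real_interval_borel_measurable by simp
qed

lemma nn_integral_indicator_Icc_split:
  fixes f :: "real \<Rightarrow> ennreal"
  assumes f: "f \<in> borel_measurable borel" and "a \<le> t" "t \<le> b"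
  shows "(\<integral>\<^sup>+ w. f w * indicator {a..b} w \<partial>lborel)
    = (\<integral>\<^sup>+ w. f w * indicator {a..t} w \<partial>lborel) + (\<integral>\<^sup>+ w. f w * indicator {t..b} w \<partial>lborel)"
proof -
  have "(\<integral>\<^sup>+ w. f w * indicator {a..b} w \<partial>lborel)
      = (\<integral>\<^sup>+ w. f w * indicator {a..t} w + f w * indicator {t<..b} w \<partial>lborel)"
    using assms by (intro nn_integral_cong) (auto simp: indicator_def)
  also have "\<dots> = (\<integral>\<^sup>+ w. f w * indicator {a..t} w \<partial>lborel)
      + (\<integral>\<^sup>+ w. f w * indicator {t<..b} w \<partial>lborel)"
    using f by (intro nn_integral_add) auto
  also have "(\<integral>\<^sup>+ w. f w * indicator {t<..b} w \<partial>lborel)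
      = (\<integral>\<^sup>+ w. f w * indicator {t..b} w \<partial>lborel)"
    by (intro nn_integral_cong_AE eventually_mono[OF AE_lborel_singleton[of t]])
       (auto simp: indicator_def)
  finally show ?thesis .
qed

lemma expect_abs_split:
  assumes "0 \<le> t" "t \<le> 1"
  shows "expect_abs X = (\<integral>\<^sup>+ w. rearr X w * indicator {0..t} w \<partial>lborel)
      + (\<integral>\<^sup>+ w. rearr X w * indicator {t..1} w \<partial>lborel)"
  unfolding expect_abs_def
  using nn_integral_indicator_Icc_split[OF rearr_borel_measurable assms] .

lemma CVar_one_minus_abs:
  "CVar (1 - s) (\<lambda>x. \<bar>X x\<bar>) = ennreal (1 / s) * (\<integral>\<^sup>+ w. rearr X w * indicator {0..s} w \<partial>lborel)"
  by (simp add: CVar_def rearr_abs)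

lemma concave_on_ge_diagonal:
  fixes \<phi> :: "real \<Rightarrow> real"
  assumes "concave_on {0..1} \<phi>" "\<phi> 0 = 0" "\<phi> 1 = 1" "s \<in> {0..1}"
  shows "s \<le> \<phi> s"
  using concave_onD[OF assms(1), of s 0 1] assms(2-4) by simp

lemma ennreal_Marcinkiewicz_weights_eq_RIM_weights:
  fixes p s :: real and A B :: ennreal
  assumes s: "0 < s" "s < 1" and p: "s \<le> p" "p \<le> 1"
  defines "\<beta> \<equiv> (1 - p) / (1 - s)"
  shows "ennreal (p / s) * A + ennreal ((p - 1) / (s - 1)) * B
    = ennreal \<beta> * (A + B) + ennreal (1 - \<beta>) * (ennreal (1 / s) * A)"
proof -
  define c where "c = (1 - \<beta>) / s"
  have "0 \<le> \<beta>" "\<beta> \<le> 1" using s p by (simp_all add: \<beta>_def field_simps)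
  then have "0 \<le> c" using s by (simp add: c_def)
  have "\<beta> * (1 - s) = 1 - p"
    using s by (simp add: \<beta>_def)
  then have "p / s = \<beta> + c"
    using s by (simp add: c_def field_simps)
  then have "ennreal (p / s) = ennreal \<beta> + ennreal c"
    using \<open>0 \<le> \<beta>\<close> \<open>0 \<le> c\<close> by simp
  moreover have "(p - 1) / (s - 1) = \<beta>"
    using s by (simp add: \<beta>_def field_simps)
  moreover have "ennreal (1 - \<beta>) * (ennreal (1 / s) * A) = ennreal c * A"
    using \<open>\<beta> \<le> 1\<close> s by (simp add: c_def mult.assoc[symmetric] ennreal_mult'[symmetric])
  ultimately show ?thesis
    by (simp add: distrib_left distrib_right add_ac)
qed

lemma SUP_unit_interval_reflect:
  "(SUP s\<in>{0<..<1::real}. f (1 - s)) = (SUP t\<in>{0<..<1}. f t)"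
proof -
  have "(\<lambda>s. 1 - s) ` {0<..<1::real} = {0<..<1}"
    by (auto simp: image_iff intro!: bexI[where x="1 - _"])
  then show ?thesis
    by (metis image_image)
qed

theorem theorem22:
  fixes \<phi> :: "real \<Rightarrow> real" and X :: "real \<Rightarrow> real"
  assumes "\<forall>x\<in>{0..1}. \<phi> x \<in> {0..1}"
    and "concave_on {0..1} \<phi>"
    and "\<phi> 0 = 0" and "\<phi> 1 = 1"
    and "continuous (at 0 within {0..1}) \<phi>"
    and "X \<in> borel_measurable lebesgue"
  shows "TM_norm \<phi> X = (SUP t\<in>{0<..<1}.
            ennreal ((1 - \<phi> (1 - t)) / t) * expect_abs X
          + ennreal (1 - (1 - \<phi> (1 - t)) / t) * CVar t (\<lambda>x. \<bar>X x\<bar>))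
       \<and> TM_norm \<phi> X = (SUP t\<in>{0<..<1}. RIM t ((1 - \<phi> (1 - t)) / t) (\<lambda>x. \<bar>X x\<bar>))"
proof -
  define g where "g t = ennreal ((1 - \<phi> (1 - t)) / t) * expect_abs X
          + ennreal (1 - (1 - \<phi> (1 - t)) / t) * CVar t (\<lambda>x. \<bar>X x\<bar>)" for t
  let ?A = "\<lambda>s. \<integral>\<^sup>+ w. rearr X w * indicator {0..s} w \<partial>lborel"
  let ?B = "\<lambda>s. \<integral>\<^sup>+ w. rearr X w * indicator {s..1} w \<partial>lborel"
  have term_eq: "ennreal (\<phi> s / s) * ?A s + ennreal ((\<phi> s - 1) / (s - 1)) * ?B s = g (1 - s)"
    if s: "0 < s" "s < 1" for s
  proof -
    have "g (1 - s) = ennreal ((1 - \<phi> s) / (1 - s)) * (?A s + ?B s)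
        + ennreal (1 - (1 - \<phi> s) / (1 - s)) * (ennreal (1 / s) * ?A s)"
      using s by (simp add: g_def expect_abs_split[of s] CVar_one_minus_abs)
    moreover have "s \<le> \<phi> s" "\<phi> s \<le> 1"
      using s assms(1) concave_on_ge_diagonal[OF assms(2-4), of s] by auto
    ultimately show ?thesis
      using ennreal_Marcinkiewicz_weights_eq_RIM_weights[OF s] by simp
  qed
  have "TM_norm \<phi> X = (SUP s\<in>{0<..<1}. g (1 - s))"
    unfolding TM_norm_def by (intro SUP_cong) (simp_all add: term_eq)
  also have "\<dots> = (SUP t\<in>{0<..<1}. g t)"
    by (rule SUP_unit_interval_reflect)
  finally show ?thesis
    by (simp add: g_def RIM_def expect_abs_def rearr_abs)
qed

end
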